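(* Let $n \geq 2$ be an integer and let $F$ be any field of characteristic zero. For $a = (a_1,\dots,a_{n-1}) \in F^{n-1}$ define the polynomials $Q_a(x) = n(x - a_1/n)(x-a_2)\cdots(x-a_{n-1}) \in F[x]$ and $P_{a,0}(x) = \int_0^x Q_a(t)\,dt \in F[x]$ (the unique antiderivative of $Q_a$ with zero constant term). Then there exist $a_1,\dots,a_{n-1} \in F$ such that the values $P_{a,0}(a_1/n), P_{a,0}(a_2), \dots, P_{a,0}(a_{n-1})$ are pairwise distinct. *)

theory Defs
  imports "HOL-Computational_Algebra.Polynomial"
begin

definition poly_antideriv :: "'a::field_char_0 poly \<Rightarrow> 'a poly" where
  "poly_antideriv p = Poly (0 # map (\<lambda>i. coeff p i / of_nat (Suc i)) [0..<Suc (degree p)])"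

definition Qpoly :: "nat \<Rightarrow> (nat \<Rightarrow> 'a::field_char_0) \<Rightarrow> 'a poly" where
  "Qpoly n a = smult (of_nat n) ([:- (a 1 / of_nat n), 1:] * (\<Prod>i\<in>{2..n-1}. [:- a i, 1:]))"

definition Ppoly0 :: "nat \<Rightarrow> (nat \<Rightarrow> 'a::field_char_0) \<Rightarrow> 'a poly" where
  "Ppoly0 n a = poly_antideriv (Qpoly n a)"

definition crit_pt :: "nat \<Rightarrow> (nat \<Rightarrow> 'a::field_char_0) \<Rightarrow> nat \<Rightarrow> 'a" where
  "crit_pt n a i = (if i = 1 then a 1 / of_nat n else a i)"

end

theory Submission
  imports Defs
begin

(* Up to the substitution a_1 := n a_1 and the factor n, the claim is that the
   antiderivative P of R = (x - b_1)...(x - b_m) takes pairwise distinct values at the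
   roots b_i, for suitable b. Adding a root X turns P into
   int_0^x t R(t) dt - X int_0^x R(t) dt, so the value at an old root b_i becomes
   c_i - X d_i with d_i the old value, and the value at X is H(X) for a polynomial H
   of degree m + 2. These m + 1 polynomials in X are pairwise distinct, hence their
   values are pairwise distinct for all but finitely many X. *)

lemma coeff_poly_antideriv:
  "coeff (poly_antideriv p) k = (if k = 0 then 0 else coeff p (k - 1) / of_nat k)"
proof (cases k)
  case 0
  then show ?thesis by (simp add: poly_antideriv_def coeff_Poly_eq)
next
  case (Suc i)
  show ?thesis
  proof (cases "i \<le> degree p")
    case True
    then show ?thesis using Suc
      by (simp add: poly_antideriv_def coeff_Poly_eq nth_default_def del: upt_Suc)
  next
    case False
    then have "coeff p i = 0" by (simp add: coeff_eq_0)
    then show ?thesis using Suc False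
      by (simp add: poly_antideriv_def coeff_Poly_eq nth_default_def del: upt_Suc)
  qed
qed

lemma poly_antideriv_diff: "poly_antideriv (p - q) = poly_antideriv p - poly_antideriv q"
  by (rule poly_eqI) (simp add: coeff_poly_antideriv diff_divide_distrib)

lemma poly_antideriv_smult: "poly_antideriv (smult c p) = smult c (poly_antideriv p)"
  by (rule poly_eqI) (simp add: coeff_poly_antideriv)

(* The polynomial int_0^x t p(t) dt - x int_0^x p(t) dt has leading coefficient
   lead_coeff p (1/(d+2) - 1/(d+1)), where d = degree p. *)
lemma coeff_poly_antideriv_pCons_defect_nonzero:
  fixes p :: "'a::field_char_0 poly"
  assumes "p \<noteq> 0"
  shows "coeff (poly_antideriv (pCons 0 p) - pCons 0 (poly_antideriv p)) (degree p + 2) \<noteq> 0"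
proof -
  let ?d = "degree p"
  have "(of_nat (?d + 2) :: 'a) \<noteq> of_nat (?d + 1)"
    by (simp only: of_nat_eq_iff)
  then have "1 / (of_nat (?d + 2) :: 'a) - 1 / of_nat (?d + 1) \<noteq> 0"
    by (simp add: field_simps)
  moreover have "coeff (poly_antideriv (pCons 0 p) - pCons 0 (poly_antideriv p)) (?d + 2)
      = lead_coeff p * (1 / of_nat (?d + 2) - 1 / of_nat (?d + 1))"
    by (simp add: coeff_poly_antideriv field_simps numeral_2_eq_2)
  ultimately show ?thesis using assms by simp
qed

lemma ex_inj_on_poly_values:
  fixes F :: "'i \<Rightarrow> 'a::{ring_char_0,idom} poly"
  assumes "finite I" and "inj_on F I"
  shows "\<exists>x. inj_on (\<lambda>i. poly (F i) x) I"
proof -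
  define pairs where "pairs = {(i, j) \<in> I \<times> I. i \<noteq> j}"
  define D where "D = (\<Prod>(i, j)\<in>pairs. F i - F j)"
  have "finite pairs"
    using assms(1) by (auto simp: pairs_def intro: finite_subset[of _ "I \<times> I"])
  moreover have "F i - F j \<noteq> 0" if "(i, j) \<in> pairs" for i j
    using that assms(2) by (auto simp: pairs_def inj_on_def)
  ultimately have "D \<noteq> 0" by (auto simp: D_def)
  then obtain x where "poly D x \<noteq> 0" using poly_all_0_iff_0 by blast
  then have "poly (F i) x \<noteq> poly (F j) x" if "(i, j) \<in> pairs" for i j
    using that \<open>finite pairs\<close> by (auto simp: D_def poly_prod)
  then show ?thesis by (auto simp: inj_on_def pairs_def)
qed

definition root_poly :: "nat \<Rightarrow> (nat \<Rightarrow> 'a::comm_ring_1) \<Rightarrow> 'a poly" where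
  "root_poly m b = (\<Prod>i\<in>{1..m}. [:- b i, 1:])"

lemma root_poly_nonzero: "root_poly m (b :: nat \<Rightarrow> 'a::idom) \<noteq> 0"
  by (simp add: root_poly_def)

lemma root_poly_Suc: "root_poly (Suc m) b = [:- b (Suc m), 1:] * root_poly m b"
  by (simp add: root_poly_def atLeastAtMostSuc_conv mult.commute)

lemma root_poly_cong: "(\<And>i. i \<in> {1..m} \<Longrightarrow> b i = b' i) \<Longrightarrow> root_poly m b = root_poly m b'"
  unfolding root_poly_def by (rule prod.cong) auto

lemma poly_antideriv_root_poly_Suc:
  "poly_antideriv (root_poly (Suc m) b)
     = poly_antideriv (pCons 0 (root_poly m b)) - smult (b (Suc m)) (poly_antideriv (root_poly m b))"
  by (simp add: root_poly_Suc mult_pCons_left poly_antideriv_diff poly_antideriv_smult)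

lemma ex_root_poly_antideriv_inj_on_roots:
  "\<exists>b :: nat \<Rightarrow> 'a::field_char_0. inj_on (\<lambda>i. poly (poly_antideriv (root_poly m b)) (b i)) {1..m}"
proof (induction m)
  case 0
  then show ?case by simp
next
  case (Suc m)
  then obtain b :: "nat \<Rightarrow> 'a"
    where inj: "inj_on (\<lambda>i. poly (poly_antideriv (root_poly m b)) (b i)) {1..m}"
    by blast
  define R where "R = root_poly m b"
  define c where "c i = poly (poly_antideriv (pCons 0 R)) (b i)" for i
  define d where "d i = poly (poly_antideriv R) (b i)" for i
  define H where "H = poly_antideriv (pCons 0 R) - pCons 0 (poly_antideriv R)"
  define F where "F i = (if i = Suc m then H else [:c i, - d i:])" for i
  have H_nonlinear: "H \<noteq> [:c i, - d i:]" for i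
  proof -
    have "coeff H (degree R + 2) \<noteq> 0"
      unfolding H_def R_def by (rule coeff_poly_antideriv_pCons_defect_nonzero[OF root_poly_nonzero])
    moreover have "coeff [:c i, - d i:] (degree R + 2) = 0" by (simp add: numeral_2_eq_2)
    ultimately show ?thesis by metis
  qed
  have "inj_on d {1..m}" using inj by (simp add: d_def[abs_def] R_def)
  have "inj_on F {1..Suc m}"
  proof (rule inj_onI)
    fix i j assume i: "i \<in> {1..Suc m}" and j: "j \<in> {1..Suc m}" and "F i = F j"
    show "i = j"
    proof (cases "i = Suc m \<or> j = Suc m")
      case True
      then show ?thesis using \<open>F i = F j\<close> H_nonlinear unfolding F_def by metis
    next
      case False
      then have "d i = d j" using \<open>F i = F j\<close> by (simp add: F_def)
      with False i j show ?thesis using inj_onD[OF \<open>inj_on d {1..m}\<close>] by fastforce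
    qed
  qed
  then obtain X where X: "inj_on (\<lambda>i. poly (F i) X) {1..Suc m}"
    using ex_inj_on_poly_values[of "{1..Suc m}" F] by auto
  define b' where "b' = b(Suc m := X)"
  have "root_poly m b' = R" unfolding R_def by (rule root_poly_cong) (simp add: b'_def)
  then have P': "poly_antideriv (root_poly (Suc m) b')
      = poly_antideriv (pCons 0 R) - smult X (poly_antideriv R)"
    by (simp add: poly_antideriv_root_poly_Suc b'_def)
  have "poly (poly_antideriv (root_poly (Suc m) b')) (b' i) = poly (F i) X"
    if "i \<in> {1..Suc m}" for i
  proof (cases "i = Suc m")
    case True
    then show ?thesis by (simp add: P' F_def H_def) (simp add: b'_def)
  next
    case False
    then show ?thesis by (simp add: P' F_def c_def d_def) (simp add: b'_def)
  qed
  then show ?case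
    using X by (intro exI[of _ b']) (simp add: inj_on_def)
qed

theorem lemma2p4:
  fixes n :: nat
  assumes "n \<ge> 2"
  shows "\<exists>a :: nat \<Rightarrow> 'a::field_char_0.
           inj_on (\<lambda>i. poly (Ppoly0 n a) (crit_pt n a i)) {1..n-1}"
proof -
  obtain b :: "nat \<Rightarrow> 'a"
    where inj: "inj_on (\<lambda>i. poly (poly_antideriv (root_poly (n-1) b)) (b i)) {1..n-1}"
    using ex_root_poly_antideriv_inj_on_roots by blast
  define a where "a = b(1 := of_nat n * b 1)"
  have n0: "(of_nat n :: 'a) \<noteq> 0" using assms by simp
  have "{1..n-1} = insert 1 {2..n-1}" using assms by auto
  then have "root_poly (n-1) b = [:- b 1, 1:] * (\<Prod>i\<in>{2..n-1}. [:- a i, 1:])"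
    by (simp add: root_poly_def a_def)
  then have "Qpoly n a = smult (of_nat n) (root_poly (n-1) b)"
    using n0 by (simp add: Qpoly_def a_def)
  moreover have "crit_pt n a i = b i" for i
    using n0 by (simp add: crit_pt_def a_def)
  ultimately have "poly (Ppoly0 n a) (crit_pt n a i)
      = of_nat n * poly (poly_antideriv (root_poly (n-1) b)) (b i)" for i
    by (simp add: Ppoly0_def poly_antideriv_smult)
  then show ?thesis
    using inj n0 by (intro exI[of _ a]) (simp add: inj_on_def)
qed

end
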